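(* Let $T=K_2$ (the tree on $n=2$ vertices) and $k\ge2$, and let $M$ be the order-$k$ Steiner distance hypermatrix of $T$. If $\det(M)\neq0$, then $\det(M)<0$, i.e., $\operatorname{sgn}(\det(M))=(-1)^{n-1}=-1$.
   Context: For $K_2$ with vertices $1,2$, the order-$k$ Steiner distance hypermatrix $M$ has $(i_1,\dots,i_k)$ entry equal to $0$ if $i_1=\dots=i_k$ and $1$ otherwise (the Steiner distance of a vertex set is the minimum number of edges of a connected subgraph containing it). $\det$ denotes the hyperdeterminant of a symmetric hypermatrix: the unique irreducible polynomial in the entries, normalized so that the identity hypermatrix has value $1$, vanishing exactly when $\sum_{i_2,\dots,i_k}M_{a i_2\cdots i_k}x_{i_2}\cdots x_{i_k}=0$ for all $a$ has a nonzero complex solution. *)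

theory Defs
  imports Main "Jordan_Normal_Form.Determinant"
begin

text \<open>Vertices 1,2 of K_2 are encoded as indices 0,1. An order-k hypermatrix of
dimension 2 is a function on index lists of length k with entries in {0,1}.\<close>

definition steinerK2 :: "nat list \<Rightarrow> real" where
  "steinerK2 is = (if (\<forall>i\<in>set is. i = hd is) then 0 else 1)"

text \<open>Coefficient of x_1^(d-j) x_2^j in the binary form
  F_a(x) = sum over i_2..i_k of M(a,i_2,...,i_k) x_(i_2) ... x_(i_k), where d = k-1.\<close>
definition form_coeff :: "nat \<Rightarrow> (nat list \<Rightarrow> real) \<Rightarrow> nat \<Rightarrow> nat \<Rightarrow> real" where
  "form_coeff k M a j =
     (\<Sum>is\<in>{is. length is = k - 1 \<and> set is \<subseteq> {0,1} \<and> length (filter (\<lambda>i. i = 1) is) = j}.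
        M (a # is))"

definition sylv2 :: "nat \<Rightarrow> (nat list \<Rightarrow> real) \<Rightarrow> real mat" where
  "sylv2 k M = (let d = k - 1 in
     mat (2*d) (2*d) (\<lambda>(r,c).
       if r < d then (if r \<le> c \<and> c - r \<le> d then form_coeff k M 0 (c - r) else 0)
       else (if r - d \<le> c \<and> c - (r - d) \<le> d then form_coeff k M 1 (c - (r - d)) else 0)))"

text \<open>Hyperdeterminant of an order-k, dimension-2 hypermatrix: the resultant of the
 system F_0 = F_1 = 0 (for two variables the multivariate resultant is the classical
 Sylvester resultant of the two binary forms), normalized so that the identity
 hypermatrix has value 1.\<close>
definition hyperdet2 :: "nat \<Rightarrow> (nat list \<Rightarrow> real) \<Rightarrow> real" where
  "hyperdet2 k M = det (sylv2 k M)"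

end

theory Submission
  imports Defs
begin

(* With d = k - 1 the two forms are F_0 = (x + y)^d - x^d and F_1 = (x + y)^d - y^d, so
   F_1 - F_0 = x^d - y^d.  Subtracting the F_0-rows of the Sylvester matrix from the F_1-rows
   leaves a block matrix whose determinant is (-1)^d det C, where C is the d x d circulant
   matrix with first row (d choose m), m < d.  The Fourier matrix diagonalises C, with
   eigenvalues (1 + w)^d - 1 for the d-th roots of unity w.  The root w = 1 gives 2^d - 1 > 0,
   the others come in complex conjugate pairs, except w = -1 for even d, which gives -1.
   Hence (-1)^d det C <= 0. *)

section \<open>Coefficients of the Steiner forms\<close>

definition binary_words :: "nat \<Rightarrow> nat \<Rightarrow> nat list set" where
  "binary_words n j = {is. length is = n \<and> set is \<subseteq> {0,1} \<and> length (filter (\<lambda>i. i = 1) is) = j}"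

lemma binary_words_Suc:
  "binary_words (Suc n) j =
     Cons 0 ` binary_words n j \<union> (if j = 0 then {} else Cons 1 ` binary_words n (j - 1))"
  by (auto simp: binary_words_def image_iff length_Suc_conv split: if_splits)

lemma finite_binary_words: "finite (binary_words n j)"
proof (rule finite_subset)
  show "binary_words n j \<subseteq> {xs. set xs \<subseteq> {0,1} \<and> length xs = n}"
    by (auto simp: binary_words_def)
qed (rule finite_lists_length_eq, simp)

lemma card_binary_words: "card (binary_words n j) = n choose j"
proof (induction n arbitrary: j)
  case 0
  have "binary_words 0 j = (if j = 0 then {[]} else {})" by (auto simp: binary_words_def)
  then show ?case by simp
next
  case (Suc n)
  have "card (binary_words (Suc n) j) =
      card (binary_words n j) + (if j = 0 then 0 else card (binary_words n (j - 1)))"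
    unfolding binary_words_Suc
    by (subst card_Un_disjoint) (auto simp: finite_binary_words card_image)
  then show ?case
    using Suc.IH by (cases j) simp_all
qed

lemma binary_words_all_zero_iff:
  assumes "xs \<in> binary_words n j"
  shows "(\<forall>i\<in>set xs. i = 0) \<longleftrightarrow> j = 0"
proof -
  have "set xs \<subseteq> {0, 1}" and j: "j = length (filter (\<lambda>i. i = 1) xs)"
    using assms by (auto simp: binary_words_def)
  then have "(\<forall>i\<in>set xs. i = 0) \<longleftrightarrow> (\<forall>i\<in>set xs. i \<noteq> 1)"
    by auto
  then show ?thesis
    unfolding j by (simp add: filter_empty_conv)
qed

lemma binary_words_all_one_iff:
  assumes "xs \<in> binary_words n j"
  shows "(\<forall>i\<in>set xs. i = 1) \<longleftrightarrow> j = n"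
proof -
  have "j = length (filter (\<lambda>i. i = 1) xs)" and "n = length xs"
    using assms by (auto simp: binary_words_def)
  moreover have "length (filter (\<lambda>i. i = 1) xs) + length (filter (\<lambda>i. i \<noteq> 1) xs) = length xs"
    by (rule sum_length_filter_compl)
  moreover have "(\<forall>i\<in>set xs. i = 1) \<longleftrightarrow> filter (\<lambda>i. i \<noteq> 1) xs = []"
    by (simp add: filter_empty_conv)
  ultimately show ?thesis
    by auto
qed

lemma steinerK2_Cons: "steinerK2 (a # xs) = (if \<forall>i\<in>set xs. i = a then 0 else 1)"
  by (simp add: steinerK2_def)

lemma form_coeff_eq_sum: "form_coeff k M a j = (\<Sum>xs\<in>binary_words (k - 1) j. M (a # xs))"
  unfolding form_coeff_def binary_words_def ..

lemma form_coeff_steinerK2_0: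
  "form_coeff k steinerK2 0 j = (if j = 0 then 0 else real (k - 1 choose j))"
proof -
  have "form_coeff k steinerK2 0 j = (\<Sum>xs\<in>binary_words (k - 1) j. if j = 0 then 0 else 1)"
    unfolding form_coeff_eq_sum steinerK2_Cons
    by (intro sum.cong refl) (simp add: binary_words_all_zero_iff)
  then show ?thesis
    by (simp add: card_binary_words)
qed

lemma form_coeff_steinerK2_1:
  "form_coeff k steinerK2 1 j = (if j = k - 1 then 0 else real (k - 1 choose j))"
proof -
  have "form_coeff k steinerK2 1 j = (\<Sum>xs\<in>binary_words (k - 1) j. if j = k - 1 then 0 else 1)"
    unfolding form_coeff_eq_sum steinerK2_Cons
    by (intro sum.cong refl) (metis binary_words_all_one_iff)
  then show ?thesis
    by (simp add: card_binary_words)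
qed

section \<open>Reduction of the Sylvester matrix to a circulant\<close>

definition sylvester_pair :: "nat \<Rightarrow> (nat \<Rightarrow> 'a) \<Rightarrow> (nat \<Rightarrow> 'a) \<Rightarrow> 'a :: zero mat" where
  "sylvester_pair d a b = mat (2 * d) (2 * d) (\<lambda>(r, c).
     if r < d then (if r \<le> c \<and> c - r \<le> d then a (c - r) else 0)
     else (if r - d \<le> c \<and> c - (r - d) \<le> d then b (c - (r - d)) else 0))"

lemma sylv2_eq_sylvester_pair:
  "sylv2 k M = sylvester_pair (k - 1) (form_coeff k M 0) (form_coeff k M 1)"
  unfolding sylv2_def sylvester_pair_def Let_def ..

(* (s + d - r) mod d is (s - r) mod d, written so that no truncated subtraction occurs. *)
definition circulant :: "nat \<Rightarrow> (nat \<Rightarrow> 'a) \<Rightarrow> 'a mat" where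
  "circulant d c = mat d d (\<lambda>(r, s). c ((s + d - r) mod d))"

lemma circulant_carrier [simp]: "circulant d c \<in> carrier_mat d d"
  by (simp add: circulant_def)

lemma det_sylvester_pair:
  fixes a b :: "nat \<Rightarrow> 'a :: idom"
  assumes b: "\<And>j. j \<le> d \<Longrightarrow> b j = a j + (if j = 0 then 1 else if j = d then -1 else 0)"
  shows "det (sylvester_pair d a b) = (-1) ^ d * det (circulant d (\<lambda>m. if m = 0 then a 0 + a d else a m))"
proof -
  define U where "U = mat d d (\<lambda>(r, c). if r \<le> c then a (c - r) else 0)"
  define V where "V = mat d d (\<lambda>(r, c). if c \<le> r then a (c + d - r) else 0)"
  define I where "I = (1\<^sub>m d :: 'a mat)"
  define J where "J = - I"
  have carrier: "U \<in> carrier_mat d d" "V \<in> carrier_mat d d" "I \<in> carrier_mat d d" "J \<in> carrier_mat d d"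
    by (auto simp: U_def V_def I_def J_def)
  have "sylvester_pair d a b = four_block_mat U V (U + I) (V - I)"
  proof (rule eq_matI)
    fix i j assume "i < dim_row (four_block_mat U V (U + I) (V - I))"
      "j < dim_col (four_block_mat U V (U + I) (V - I))"
    then have "i < d + d" "j < d + d" using carrier by auto
    then show "sylvester_pair d a b $$ (i, j) = four_block_mat U V (U + I) (V - I) $$ (i, j)"
      using carrier by (auto simp: sylvester_pair_def U_def V_def I_def b index_mat_four_block)
  qed (use carrier in \<open>auto simp: sylvester_pair_def\<close>)
  also have "\<dots> = four_block_mat I (0\<^sub>m d d) I I * four_block_mat U V I J"
  proof -
    have "four_block_mat I (0\<^sub>m d d) I I * four_block_mat U V I J =
        four_block_mat (I * U + 0\<^sub>m d d * I) (I * V + 0\<^sub>m d d * J) (I * U + I * I) (I * V + I * J)"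
      by (rule mult_four_block_mat) (use carrier in auto)
    moreover have "- 0\<^sub>m d d = (0\<^sub>m d d :: 'a mat)"
      by (rule eq_matI) auto
    ultimately show ?thesis
      using carrier by (simp add: I_def J_def minus_add_uminus_mat)
  qed
  finally have "det (sylvester_pair d a b) = det (four_block_mat I (0\<^sub>m d d) I I) * det (four_block_mat U V I J)"
    using carrier by (simp add: det_mult[of _ "d + d"])
  also have "det (four_block_mat I (0\<^sub>m d d) I I) = 1"
    by (subst det_four_block_mat_upper_right_zero[of _ d _ d]) (auto simp: I_def)
  also have "det (four_block_mat U V I J) = det (U * J - V * I)"
    by (rule det_four_block_mat) (use carrier in \<open>auto simp: J_def\<close>)
  also have "U * J - V * I = (-1) \<cdot>\<^sub>m (U + V)"
    by (rule eq_matI) (use carrier in \<open>auto simp: J_def I_def\<close>)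
  also have "U + V = circulant d (\<lambda>m. if m = 0 then a 0 + a d else a m)"
  proof (rule eq_matI)
    fix r s assume "r < dim_row (circulant d (\<lambda>m. if m = 0 then a 0 + a d else a m))"
      "s < dim_col (circulant d (\<lambda>m. if m = 0 then a 0 + a d else a m))"
    then have rs: "r < d" "s < d" by (auto simp: circulant_def)
    then have "(s + d - r) mod d = (if r \<le> s then s - r else s + d - r)"
      by (auto simp: mod_if)
    then show "(U + V) $$ (r, s) = circulant d (\<lambda>m. if m = 0 then a 0 + a d else a m) $$ (r, s)"
      using rs by (auto simp: U_def V_def circulant_def)
  qed (use carrier in \<open>auto simp: circulant_def\<close>)
  finally show ?thesis
    by (simp add: circulant_def)
qed

lemma hyperdet2_steinerK2_eq_circulant:
  assumes "2 \<le> k"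
  shows "hyperdet2 k steinerK2 = (-1) ^ (k - 1) * det (circulant (k - 1) (\<lambda>m. real (k - 1 choose m)))"
proof -
  define d where "d = k - 1"
  have coeff0: "form_coeff k steinerK2 0 = (\<lambda>j. if j = 0 then 0 else real (d choose j))"
    by (simp add: fun_eq_iff form_coeff_steinerK2_0 d_def)
  have coeff1: "form_coeff k steinerK2 1 j =
      form_coeff k steinerK2 0 j + (if j = 0 then 1 else if j = d then -1 else 0)" for j
    unfolding form_coeff_steinerK2_0 form_coeff_steinerK2_1 using assms by (auto simp: d_def)
  have "hyperdet2 k steinerK2 = (-1) ^ d * det (circulant d (\<lambda>m.
      if m = 0 then form_coeff k steinerK2 0 0 + form_coeff k steinerK2 0 d else form_coeff k steinerK2 0 m))"
    unfolding hyperdet2_def sylv2_eq_sylvester_pair d_def[symmetric] by (rule det_sylvester_pair) (rule coeff1)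
  also have "(\<lambda>m. if m = 0 then form_coeff k steinerK2 0 0 + form_coeff k steinerK2 0 d
      else form_coeff k steinerK2 0 m) = (\<lambda>m. real (d choose m))"
    using assms by (auto simp: coeff0 d_def)
  finally show ?thesis
    unfolding d_def .
qed

section \<open>Determinants of circulant matrices\<close>

lemma power_mod_order:
  fixes z :: "'a :: monoid_mult"
  assumes "z ^ d = 1"
  shows "z ^ n = z ^ (n mod d)"
proof -
  have "z ^ n = (z ^ d) ^ (n div d) * z ^ (n mod d)"
    by (simp flip: power_mult power_add)
  with assms show ?thesis
    by simp
qed

lemma circulant_row_sum:
  fixes z :: "'a :: comm_semiring_1"
  assumes z: "z ^ d = 1" and r: "r < d"
  shows "(\<Sum>s<d. c ((s + d - r) mod d) * z ^ s) = z ^ r * (\<Sum>m<d. c m * z ^ m)"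
proof -
  have bij: "bij_betw (\<lambda>m. (m + r) mod d) {..<d} {..<d}"
    by (rule bij_betw_byWitness[where f' = "\<lambda>s. (s + d - r) mod d"])
      (use r in \<open>auto simp: mod_if\<close>)
  have "(\<Sum>s<d. c ((s + d - r) mod d) * z ^ s) =
      (\<Sum>m<d. c (((m + r) mod d + d - r) mod d) * z ^ ((m + r) mod d))"
    by (rule sum.reindex_bij_betw[OF bij, symmetric])
  also have "\<dots> = (\<Sum>m<d. c m * z ^ (m + r))"
  proof (intro sum.cong refl)
    fix m assume "m \<in> {..<d}"
    then have "((m + r) mod d + d - r) mod d = m"
      using r by (auto simp: mod_if)
    then show "c (((m + r) mod d + d - r) mod d) * z ^ ((m + r) mod d) = c m * z ^ (m + r)"
      by (simp flip: power_mod_order[OF z])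
  qed
  also have "\<dots> = z ^ r * (\<Sum>m<d. c m * z ^ m)"
    by (simp add: sum_distrib_left power_add mult_ac)
  finally show ?thesis .
qed

definition unit_root :: "nat \<Rightarrow> complex" where
  "unit_root d = cis (2 * pi / real d)"

lemma unit_root_nonzero [simp]: "unit_root d \<noteq> 0"
  by (simp add: unit_root_def)

lemma unit_root_pow: "unit_root d ^ n = cis (2 * pi * real n / real d)"
  by (simp add: unit_root_def DeMoivre mult_ac)

lemma unit_root_pow_self: "0 < d \<Longrightarrow> unit_root d ^ d = 1"
  by (simp add: unit_root_pow)

lemma unit_root_pow_pow_self: "0 < d \<Longrightarrow> (unit_root d ^ j) ^ d = 1"
  by (metis mult.commute power_mult power_one unit_root_pow_self)

lemma inj_on_unit_root_pow: "0 < d \<Longrightarrow> inj_on (\<lambda>k. unit_root d ^ k) {..<d}"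
  using bij_betw_roots_unity unfolding bij_betw_def unit_root_pow by blast

lemma unit_root_pow_complement:
  assumes "0 < d" "j \<le> d"
  shows "unit_root d ^ (d - j) = cnj (unit_root d ^ j)"
proof -
  have "unit_root d ^ (d - j) * unit_root d ^ j = 1"
    using assms by (simp add: unit_root_pow_self flip: power_add)
  moreover have "cnj (unit_root d ^ j) * unit_root d ^ j = 1"
    by (simp add: unit_root_def cis_cnj cis_mult flip: power_mult_distrib)
  ultimately show ?thesis
    by (metis mult_cancel_right power_not_zero cis_neq_zero unit_root_def)
qed

lemma unit_root_pow_half: "0 < d \<Longrightarrow> even d \<Longrightarrow> unit_root d ^ (d div 2) = -1"
  by (auto simp: unit_root_pow real_of_nat_div)

definition fourier_mat :: "nat \<Rightarrow> complex mat" where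
  "fourier_mat d = mat d d (\<lambda>(i, j). unit_root d ^ (i * j))"

lemma fourier_mat_mult_inverse:
  assumes d: "0 < d"
  shows "fourier_mat d * mat d d (\<lambda>(i, j). inverse (unit_root d) ^ (i * j)) = of_nat d \<cdot>\<^sub>m 1\<^sub>m d"
proof (rule eq_matI)
  fix i j assume "i < dim_row (of_nat d \<cdot>\<^sub>m 1\<^sub>m d :: complex mat)" "j < dim_col (of_nat d \<cdot>\<^sub>m 1\<^sub>m d :: complex mat)"
  then have ij: "i < d" "j < d" by auto
  define z where "z = unit_root d ^ i * inverse (unit_root d) ^ j"
  have z_div: "z = unit_root d ^ i / unit_root d ^ j"
    by (simp add: z_def divide_inverse power_inverse)
  have "z ^ d = (unit_root d ^ d) ^ i / (unit_root d ^ d) ^ j"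
    unfolding z_div power_divide by (simp flip: power_mult add: mult.commute)
  then have "z ^ d = 1"
    using d by (simp add: unit_root_pow_self)
  moreover have "z = 1 \<longleftrightarrow> i = j"
    using inj_on_unit_root_pow[OF d] ij by (auto simp: z_div inj_on_def)
  moreover have "(fourier_mat d * mat d d (\<lambda>(i, j). inverse (unit_root d) ^ (i * j))) $$ (i, j) = (\<Sum>m<d. z ^ m)"
    using ij by (auto simp: fourier_mat_def scalar_prod_def atLeast0LessThan z_def
        power_mult_distrib mult.commute[of _ j] intro!: sum.cong simp flip: power_mult)
  ultimately show "(fourier_mat d * mat d d (\<lambda>(i, j). inverse (unit_root d) ^ (i * j))) $$ (i, j) =
      (of_nat d \<cdot>\<^sub>m 1\<^sub>m d :: complex mat) $$ (i, j)"
    using ij by (auto simp: geometric_sum)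
qed (auto simp: fourier_mat_def)

lemma det_fourier_mat_nonzero:
  assumes d: "0 < d"
  shows "det (fourier_mat d) \<noteq> 0"
proof -
  let ?G = "mat d d (\<lambda>(i, j). inverse (unit_root d) ^ (i * j))"
  have "det (fourier_mat d) * det ?G = det (fourier_mat d * ?G)"
    by (rule det_mult[symmetric]) (auto simp: fourier_mat_def)
  also have "\<dots> = of_nat d ^ d"
    by (simp add: fourier_mat_mult_inverse[OF d])
  finally show ?thesis
    using d by auto
qed

lemma circulant_mult_fourier_mat:
  fixes c :: "nat \<Rightarrow> complex"
  assumes d: "0 < d"
  shows "circulant d c * fourier_mat d =
    fourier_mat d * mat_diag d (\<lambda>j. \<Sum>m<d. c m * (unit_root d ^ j) ^ m)"
proof (rule eq_matI)
  fix r j assume "r < dim_row (fourier_mat d * mat_diag d (\<lambda>j. \<Sum>m<d. c m * (unit_root d ^ j) ^ m))"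
    "j < dim_col (fourier_mat d * mat_diag d (\<lambda>j. \<Sum>m<d. c m * (unit_root d ^ j) ^ m))"
  then have rj: "r < d" "j < d" by (auto simp: fourier_mat_def mat_diag_def)
  have root: "(unit_root d ^ j) ^ d = 1"
    using d by (rule unit_root_pow_pow_self)
  have "(circulant d c * fourier_mat d) $$ (r, j) = (\<Sum>s<d. c ((s + d - r) mod d) * (unit_root d ^ j) ^ s)"
    using rj by (simp add: circulant_def fourier_mat_def scalar_prod_def atLeast0LessThan mult.commute
        flip: power_mult)
  also have "\<dots> = (unit_root d ^ j) ^ r * (\<Sum>m<d. c m * (unit_root d ^ j) ^ m)"
    by (rule circulant_row_sum[OF root rj(1)])
  also have "\<dots> = (fourier_mat d * mat_diag d (\<lambda>j. \<Sum>m<d. c m * (unit_root d ^ j) ^ m)) $$ (r, j)"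
    using rj by (simp add: mat_diag_mult_right[of _ d] fourier_mat_def mult.commute flip: power_mult)
  finally show "(circulant d c * fourier_mat d) $$ (r, j) =
      (fourier_mat d * mat_diag d (\<lambda>j. \<Sum>m<d. c m * (unit_root d ^ j) ^ m)) $$ (r, j)" .
qed (auto simp: circulant_def fourier_mat_def mat_diag_def)

lemma det_mat_diag: "det (mat_diag n f) = (\<Prod>i<n. f i)"
  by (subst det_upper_triangular[of _ n])
    (auto simp: upper_triangular_def mat_diag_def prod_list_diag_prod atLeast0LessThan)

lemma det_circulant:
  fixes c :: "nat \<Rightarrow> complex"
  assumes d: "0 < d"
  shows "det (circulant d c) = (\<Prod>j<d. \<Sum>m<d. c m * (unit_root d ^ j) ^ m)"
proof -
  have F: "fourier_mat d \<in> carrier_mat d d"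
    by (simp add: fourier_mat_def)
  have "det (circulant d c) * det (fourier_mat d) =
      det (fourier_mat d) * det (mat_diag d (\<lambda>j. \<Sum>m<d. c m * (unit_root d ^ j) ^ m))"
    using circulant_mult_fourier_mat[OF d, of c] F
    by (metis circulant_carrier det_mult mat_diag_dim)
  then show ?thesis
    using det_fourier_mat_nonzero[OF d] by (simp add: det_mat_diag)
qed

section \<open>Sign of the binomial circulant\<close>

lemma sum_binomial_lessThan:
  fixes z :: "'a :: comm_ring_1"
  shows "(\<Sum>m<d. of_nat (d choose m) * z ^ m) = (1 + z) ^ d - z ^ d"
proof -
  have "(1 + z) ^ d = (\<Sum>m\<le>d. of_nat (d choose m) * z ^ m)"
    using binomial_ring[of z 1 d] by (simp add: add.commute)
  also have "\<dots> = (\<Sum>m<d. of_nat (d choose m) * z ^ m) + z ^ d"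
    by (simp flip: lessThan_Suc_atMost)
  finally show ?thesis
    by simp
qed

lemma of_real_det_circulant:
  "complex_of_real (det (circulant d c)) = det (circulant d (\<lambda>m. complex_of_real (c m)))"
proof -
  have "map_mat complex_of_real (circulant d c) = circulant d (\<lambda>m. complex_of_real (c m))"
    by (rule eq_matI) (auto simp: circulant_def)
  then show ?thesis
    by (metis of_real_hom.hom_det)
qed

lemma det_binomial_circulant:
  assumes d: "0 < d"
  shows "complex_of_real (det (circulant d (\<lambda>m. real (d choose m)))) =
    (\<Prod>j<d. (1 + unit_root d ^ j) ^ d - 1)"
  using d by (simp add: of_real_det_circulant det_circulant sum_binomial_lessThan unit_root_pow_pow_self)

lemma prod_conjugate_symmetric:
  fixes f :: "nat \<Rightarrow> complex"
  assumes d: "0 < d" and sym: "\<And>j. 0 < j \<Longrightarrow> j < d \<Longrightarrow> f (d - j) = cnj (f j)"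
  shows "\<exists>r\<ge>0. (\<Prod>j\<in>{1..<d}. f j) = complex_of_real r * (if even d then f (d div 2) else 1)"
proof -
  define h where "h = (d - 1) div 2"
  define M where "M = (if even d then {d div 2} else {})"
  have inj: "inj_on (\<lambda>j. d - j) {1..h}"
    by (rule inj_onI) (auto simp: h_def)
  have split: "{1..<d} = {1..h} \<union> (\<lambda>j. d - j) ` {1..h} \<union> M"
  proof -
    have "{d - h..<d} \<subseteq> (\<lambda>j. d - j) ` {1..h}"
    proof
      fix x assume "x \<in> {d - h..<d}"
      then have "d - x \<in> {1..h}" "x = d - (d - x)"
        by (auto simp: h_def)
      then show "x \<in> (\<lambda>j. d - j) ` {1..h}"
        by blast
    qed
    then have "(\<lambda>j. d - j) ` {1..h} = {d - h..<d}"
      by (auto simp: h_def)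
    then show ?thesis
      using d by (auto simp: M_def h_def; presburger)
  qed
  have disjoint: "{1..h} \<inter> (\<lambda>j. d - j) ` {1..h} = {}" "({1..h} \<union> (\<lambda>j. d - j) ` {1..h}) \<inter> M = {}"
    using d by (auto simp: M_def h_def; presburger)+
  have "(\<Prod>j\<in>{1..<d}. f j) = (\<Prod>j\<in>{1..h}. f j) * (\<Prod>j\<in>{1..h}. f (d - j)) * (\<Prod>j\<in>M. f j)"
    unfolding split using disjoint inj
    by (simp add: prod.union_disjoint prod.reindex M_def)
  also have "(\<Prod>j\<in>{1..h}. f j) * (\<Prod>j\<in>{1..h}. f (d - j)) = (\<Prod>j\<in>{1..h}. f j * cnj (f j))"
    by (auto simp: h_def sym prod.distrib[symmetric] intro!: prod.cong)
  also have "\<dots> = complex_of_real (\<Prod>j\<in>{1..h}. (cmod (f j))\<^sup>2)"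
    unfolding of_real_prod by (simp only: complex_norm_square)
  also have "(\<Prod>j\<in>M. f j) = (if even d then f (d div 2) else 1)"
    by (simp add: M_def)
  finally show ?thesis
    by (intro exI[of _ "\<Prod>j\<in>{1..h}. (cmod (f j))\<^sup>2"]) (auto intro: prod_nonneg)
qed

lemma det_binomial_circulant_sign:
  assumes d: "0 < d"
  shows "(-1) ^ d * det (circulant d (\<lambda>m. real (d choose m))) \<le> 0"
proof -
  define \<mu> where "\<mu> j = (1 + unit_root d ^ j) ^ d - 1" for j
  have conj: "\<mu> (d - j) = cnj (\<mu> j)" if "0 < j" "j < d" for j
    using that d by (simp add: \<mu>_def unit_root_pow_complement)
  obtain r where r: "r \<ge> 0" "(\<Prod>j\<in>{1..<d}. \<mu> j) = complex_of_real r * (if even d then \<mu> (d div 2) else 1)"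
    using prod_conjugate_symmetric[of d \<mu>, OF d conj] by blast
  have "{..<d} = insert 0 {1..<d}"
    using d by auto
  then have "complex_of_real (det (circulant d (\<lambda>m. real (d choose m)))) = \<mu> 0 * (\<Prod>j\<in>{1..<d}. \<mu> j)"
    using det_binomial_circulant[OF d] by (simp add: \<mu>_def)
  also have "\<dots> = complex_of_real ((2 ^ d - 1) * r * (if even d then -1 else 1))"
    using r(2) d by (simp add: \<mu>_def unit_root_pow_half)
  finally have "(-1) ^ d * det (circulant d (\<lambda>m. real (d choose m))) = - ((2 ^ d - 1) * r)"
    by (simp only: of_real_eq_iff) simp
  moreover have "(1 :: real) \<le> 2 ^ d"
    by simp
  ultimately show ?thesis
    using r(1) by simp
qed

theorem mainTheorem9:
  fixes k :: nat
  assumes "k \<ge> 2"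
    and "hyperdet2 k steinerK2 \<noteq> 0"
  shows "hyperdet2 k steinerK2 < 0"
proof -
  have "hyperdet2 k steinerK2 \<le> 0"
    using assms(1) det_binomial_circulant_sign[of "k - 1"]
    by (simp add: hyperdet2_steinerK2_eq_circulant)
  with assms(2) show ?thesis
    by simp
qed

end
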